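(* For every $d\ge 2$, $\mu(\mathit{BF}(d))\le 2^{d+1}-2$.
   Context: Binary strings $c=c_0\cdots c_{d-1}$ have positions $0,\dots,d-1$ from the left; $c(i)$ is $c$ with bit $i$ complemented. $\mathit{BF}(d)$ has vertex set $\{[\ell,c]:\ell\in\{0,\dots,d\},\ c\in\{0,1\}^d\}$; for $\ell\in\{0,\dots,d-1\}$, $[\ell,c]$ is adjacent to $[\ell+1,c']$ iff $c'=c$ or $c'=c(\ell)$, and there are no other edges. For a connected graph $G$ and $X\subseteq V(G)$, two vertices $x,y$ are $X$-visible if some shortest $x,y$-path has no internal vertex in $X$; $X$ is a mutual-visibility set if every two vertices of $X$ are $X$-visible; $\mu(G)$ is the maximum size of a mutual-visibility set. *)

theory Defs
  imports Main
begin

definition is_walk :: "'a set \<Rightarrow> ('a \<Rightarrow> 'a \<Rightarrow> bool) \<Rightarrow> 'a list \<Rightarrow> bool" where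
  "is_walk V E xs \<longleftrightarrow> xs \<noteq> [] \<and> set xs \<subseteq> V \<and>
     (\<forall>i. Suc i < length xs \<longrightarrow> E (xs ! i) (xs ! Suc i))"

definition walk_of_len :: "'a set \<Rightarrow> ('a \<Rightarrow> 'a \<Rightarrow> bool) \<Rightarrow> 'a \<Rightarrow> 'a \<Rightarrow> nat \<Rightarrow> 'a list \<Rightarrow> bool" where
  "walk_of_len V E x y k xs \<longleftrightarrow> is_walk V E xs \<and> hd xs = x \<and> last xs = y \<and> length xs = Suc k"

definition graph_dist :: "'a set \<Rightarrow> ('a \<Rightarrow> 'a \<Rightarrow> bool) \<Rightarrow> 'a \<Rightarrow> 'a \<Rightarrow> nat" where
  "graph_dist V E x y = (LEAST k. \<exists>xs. walk_of_len V E x y k xs)"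

definition shortest_path :: "'a set \<Rightarrow> ('a \<Rightarrow> 'a \<Rightarrow> bool) \<Rightarrow> 'a \<Rightarrow> 'a \<Rightarrow> 'a list \<Rightarrow> bool" where
  "shortest_path V E x y xs \<longleftrightarrow> walk_of_len V E x y (graph_dist V E x y) xs"

definition internal_vertices :: "'a list \<Rightarrow> 'a set" where
  "internal_vertices xs = set (butlast (tl xs))"

definition X_visible :: "'a set \<Rightarrow> ('a \<Rightarrow> 'a \<Rightarrow> bool) \<Rightarrow> 'a set \<Rightarrow> 'a \<Rightarrow> 'a \<Rightarrow> bool" where
  "X_visible V E X x y \<longleftrightarrow> (\<exists>xs. shortest_path V E x y xs \<and> internal_vertices xs \<inter> X = {})"

definition mutual_visibility_set :: "'a set \<Rightarrow> ('a \<Rightarrow> 'a \<Rightarrow> bool) \<Rightarrow> 'a set \<Rightarrow> bool" where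
  "mutual_visibility_set V E X \<longleftrightarrow> X \<subseteq> V \<and> (\<forall>x\<in>X. \<forall>y\<in>X. X_visible V E X x y)"

definition mu :: "'a set \<Rightarrow> ('a \<Rightarrow> 'a \<Rightarrow> bool) \<Rightarrow> nat" where
  "mu V E = Max {card X | X. mutual_visibility_set V E X}"

(* Butterfly BF(d): vertices [l,c] with l \<in> {0..d}, c a binary string of length d (a bool list).
   flip c i is c with bit i complemented. *)
definition flip :: "bool list \<Rightarrow> nat \<Rightarrow> bool list" where
  "flip c i = c[i := \<not> (c ! i)]"

definition BF_V :: "nat \<Rightarrow> (nat \<times> bool list) set" where
  "BF_V d = {(l, c). l \<le> d \<and> length c = d}"

definition BF_E0 :: "nat \<Rightarrow> (nat \<times> bool list) \<Rightarrow> (nat \<times> bool list) \<Rightarrow> bool" where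
  "BF_E0 d u v \<longleftrightarrow> u \<in> BF_V d \<and> v \<in> BF_V d \<and> fst u < d \<and> fst v = Suc (fst u) \<and>
     (snd v = snd u \<or> snd v = flip (snd u) (fst u))"

definition BF_E :: "nat \<Rightarrow> (nat \<times> bool list) \<Rightarrow> (nat \<times> bool list) \<Rightarrow> bool" where
  "BF_E d u v \<longleftrightarrow> BF_E0 d u v \<or> BF_E0 d v u"

end

theory Submission
  imports Defs
begin

text \<open>Order the vertices of the butterfly by \<open>x \<le> y\<close> iff \<open>y\<close> is reached from \<open>x\<close> by an
ascending walk. Such a walk is unique, and it is the only shortest path between its ends, so a
mutual-visibility set \<open>X\<close> contains no chain of length three and therefore lies in the union of
its minimal layer \<open>T\<close> and its maximal layer. Both layers are antichains, and an antichain
contains at most one vertex per word, so each has at most \<open>2^d\<close> elements.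
If \<open>T\<close> has exactly \<open>2^d\<close> elements it meets every ascending line from level \<open>0\<close> to level \<open>d\<close>;
a walk that leaves the set of vertices strictly above \<open>T\<close> then steps onto \<open>T\<close>. A shortest
path between two non-minimal elements of \<open>X\<close> whose first bits differ has to visit level \<open>0\<close>,
hence leaves that set through an internal vertex in \<open>X\<close>. So the non-minimal elements share
their first bit and there are at most \<open>2^(d-1) \<le> 2^d - 2\<close> of them. The case of a full maximal
layer reduces to this one by the reflection \<open>(l, c) \<mapsto> (d - l, rev c)\<close>.\<close>

lemma mutual_visibility_set_subset: "mutual_visibility_set V E X \<Longrightarrow> X \<subseteq> V"
  unfolding mutual_visibility_set_def by blast

lemma mu_le:
  assumes "\<And>X. mutual_visibility_set V E X \<Longrightarrow> card X \<le> b"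
  shows "mu V E \<le> b"
proof -
  let ?S = "{card X | X. mutual_visibility_set V E X}"
  have bound: "\<forall>n\<in>?S. n \<le> b" using assms by blast
  then have "finite ?S" by (meson finite_atMost finite_subset subsetI atMost_iff)
  moreover have "mutual_visibility_set V E {}" unfolding mutual_visibility_set_def by simp
  then have "?S \<noteq> {}" by blast
  ultimately show ?thesis unfolding mu_def using bound Max_le_iff by blast
qed

lemma nth_in_internal_vertices: "0 < p \<Longrightarrow> Suc p < length xs \<Longrightarrow> xs ! p \<in> internal_vertices xs"
proof -
  assume p: "0 < p" "Suc p < length xs"
  then have "butlast (tl xs) ! (p - 1) = xs ! p" by (simp add: nth_butlast nth_tl)
  moreover have "p - 1 < length (butlast (tl xs))" using p by simp
  ultimately show ?thesis unfolding internal_vertices_def by (metis nth_mem)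
qed

lemma internal_vertices_subset: "internal_vertices xs \<subseteq> set xs"
  unfolding internal_vertices_def by (cases xs) (auto dest: in_set_butlastD)

lemma walk_of_len_nth:
  assumes "walk_of_len V E x y k xs"
  shows "is_walk V E xs" "length xs = Suc k" "xs ! 0 = x" "xs ! k = y"
proof -
  have "xs \<noteq> []" "hd xs = x" "last xs = y" "length xs = Suc k"
    using assms unfolding walk_of_len_def is_walk_def by auto
  then show "xs ! 0 = x" "xs ! k = y" "length xs = Suc k" by (simp_all add: hd_conv_nth last_conv_nth)
  show "is_walk V E xs" using assms unfolding walk_of_len_def by simp
qed

lemma walk_of_len_map:
  assumes w: "walk_of_len V E x y k xs" and V: "\<sigma> ` V \<subseteq> V"
    and E: "\<And>a b. a \<in> V \<Longrightarrow> b \<in> V \<Longrightarrow> E a b \<Longrightarrow> E (\<sigma> a) (\<sigma> b)"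
  shows "walk_of_len V E (\<sigma> x) (\<sigma> y) k (map \<sigma> xs)"
proof -
  have iw: "is_walk V E xs" and h: "hd xs = x" "last xs = y" "length xs = Suc k"
    using w unfolding walk_of_len_def by auto
  have "is_walk V E (map \<sigma> xs)"
    unfolding is_walk_def
  proof (intro conjI allI impI)
    show "map \<sigma> xs \<noteq> []" "set (map \<sigma> xs) \<subseteq> V" using iw V unfolding is_walk_def by auto
    fix i assume "Suc i < length (map \<sigma> xs)"
    then show "E (map \<sigma> xs ! i) (map \<sigma> xs ! Suc i)"
      using iw E unfolding is_walk_def by (auto simp: subset_iff)
  qed
  moreover have "xs \<noteq> []" using h by auto
  ultimately show ?thesis unfolding walk_of_len_def using h by (simp add: hd_map last_map)
qed

locale graph_involution =
  fixes V :: "'a set" and E :: "'a \<Rightarrow> 'a \<Rightarrow> bool" and \<sigma> :: "'a \<Rightarrow> 'a"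
  assumes involution: "\<And>a. a \<in> V \<Longrightarrow> \<sigma> (\<sigma> a) = a"
    and maps_to: "\<sigma> ` V \<subseteq> V"
    and preserves_edges: "\<And>a b. a \<in> V \<Longrightarrow> b \<in> V \<Longrightarrow> E a b \<Longrightarrow> E (\<sigma> a) (\<sigma> b)"
begin

lemma walk_of_len_image:
  assumes "walk_of_len V E x y k xs"
  shows "walk_of_len V E (\<sigma> x) (\<sigma> y) k (map \<sigma> xs)"
  by (rule walk_of_len_map[OF assms maps_to preserves_edges])

lemma graph_dist_eq:
  assumes "x \<in> V" "y \<in> V"
  shows "graph_dist V E (\<sigma> x) (\<sigma> y) = graph_dist V E x y"
proof -
  have "(\<exists>xs. walk_of_len V E (\<sigma> x) (\<sigma> y) k xs) \<longleftrightarrow> (\<exists>xs. walk_of_len V E x y k xs)" for k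
  proof
    assume "\<exists>xs. walk_of_len V E (\<sigma> x) (\<sigma> y) k xs"
    then obtain xs where "walk_of_len V E (\<sigma> x) (\<sigma> y) k xs" by blast
    from walk_of_len_image[OF this]
    show "\<exists>xs. walk_of_len V E x y k xs" using involution assms by auto
  next
    assume "\<exists>xs. walk_of_len V E x y k xs"
    then show "\<exists>xs. walk_of_len V E (\<sigma> x) (\<sigma> y) k xs"
      using walk_of_len_image by blast
  qed
  then show ?thesis unfolding graph_dist_def by simp
qed

lemma mutual_visibility_set_image:
  assumes mv: "mutual_visibility_set V E X"
  shows "mutual_visibility_set V E (\<sigma> ` X)"
proof -
  have XV: "X \<subseteq> V" using mutual_visibility_set_subset[OF mv] .
  have "X_visible V E (\<sigma> ` X) (\<sigma> x) (\<sigma> y)" if "x \<in> X" "y \<in> X" for x y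
  proof -
    have "X_visible V E X x y" using mv that by (simp add: mutual_visibility_set_def)
    then obtain xs where sp: "shortest_path V E x y xs" and free: "internal_vertices xs \<inter> X = {}"
      unfolding X_visible_def by auto
    have "graph_dist V E (\<sigma> x) (\<sigma> y) = graph_dist V E x y"
      using that XV by (intro graph_dist_eq) auto
    then have path: "shortest_path V E (\<sigma> x) (\<sigma> y) (map \<sigma> xs)"
      using walk_of_len_image sp unfolding shortest_path_def by simp
    have "set xs \<subseteq> V" using sp unfolding shortest_path_def walk_of_len_def is_walk_def by blast
    then have inj: "inj_on \<sigma> (set xs \<union> X)"
      using XV involution by (intro inj_on_inverseI[of _ \<sigma>]) auto
    have "internal_vertices (map \<sigma> xs) = \<sigma> ` internal_vertices xs"
      unfolding internal_vertices_def by (simp flip: map_butlast map_tl)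
    then have "internal_vertices (map \<sigma> xs) \<inter> \<sigma> ` X = {}"
      using free internal_vertices_subset[of xs] inj by (auto dest: inj_onD)
    then show ?thesis using path unfolding X_visible_def by blast
  qed
  then show ?thesis using XV maps_to unfolding mutual_visibility_set_def by blast
qed

end

lemma mem_BF_V: "x \<in> BF_V d \<longleftrightarrow> fst x \<le> d \<and> length (snd x) = d"
  unfolding BF_V_def by (cases x) auto

lemma finite_BF_V: "finite (BF_V d)"
proof -
  have "BF_V d \<subseteq> {..d} \<times> {c. length c = d}" unfolding BF_V_def by auto
  then show ?thesis
    using finite_lists_length_eq[of "UNIV :: bool set" d] by (simp add: finite_subset)
qed

lemma eq_or_flip_iff:
  assumes "length a = d" "length b = d" "l < d"
  shows "(b = a \<or> b = flip a l) \<longleftrightarrow> (\<forall>p<d. p \<noteq> l \<longrightarrow> a ! p = b ! p)"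
proof
  assume "b = a \<or> b = flip a l"
  then show "\<forall>p<d. p \<noteq> l \<longrightarrow> a ! p = b ! p" using assms by (auto simp: flip_def)
next
  assume agree: "\<forall>p<d. p \<noteq> l \<longrightarrow> a ! p = b ! p"
  show "b = a \<or> b = flip a l"
  proof (cases "b ! l = a ! l")
    case True
    then have "b = a" using agree assms by (intro nth_equalityI) auto
    then show ?thesis ..
  next
    case False
    then have "b = flip a l" using agree assms unfolding flip_def
      by (intro nth_equalityI) (auto simp: nth_list_update)
    then show ?thesis ..
  qed
qed

lemma BF_E0_iff:
  "BF_E0 d x y \<longleftrightarrow> x \<in> BF_V d \<and> y \<in> BF_V d \<and> fst y = Suc (fst x) \<and>
     (\<forall>p<d. p \<noteq> fst x \<longrightarrow> snd x ! p = snd y ! p)"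
  unfolding BF_E0_def using eq_or_flip_iff[of "snd x" d "snd y" "fst x"]
  by (auto simp: mem_BF_V)

lemma BF_E_iff:
  "BF_E d x y \<longleftrightarrow> x \<in> BF_V d \<and> y \<in> BF_V d \<and>
     (fst y = Suc (fst x) \<and> (\<forall>p<d. p \<noteq> fst x \<longrightarrow> snd x ! p = snd y ! p) \<or>
      fst x = Suc (fst y) \<and> (\<forall>p<d. p \<noteq> fst y \<longrightarrow> snd x ! p = snd y ! p))"
  unfolding BF_E_def BF_E0_iff by auto

lemma is_walk_BF_E:
  "is_walk (BF_V d) (BF_E d) xs \<Longrightarrow> Suc k < length xs \<Longrightarrow> BF_E d (xs ! k) (xs ! Suc k)"
  unfolding is_walk_def by blast

lemma is_walk_BF_V: "is_walk (BF_V d) (BF_E d) xs \<Longrightarrow> k < length xs \<Longrightarrow> xs ! k \<in> BF_V d"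
  unfolding is_walk_def by auto

lemma BF_walk_level_diff:
  assumes w: "is_walk (BF_V d) (BF_E d) xs" and "k \<le> k'" "k' < length xs"
  shows "fst (xs ! k') \<le> fst (xs ! k) + (k' - k) \<and> fst (xs ! k) \<le> fst (xs ! k') + (k' - k)"
  using assms(2,3)
proof (induction k' rule: dec_induct)
  case (step n)
  have "BF_E d (xs ! n) (xs ! Suc n)" using is_walk_BF_E[OF w] step by simp
  then have "fst (xs ! Suc n) = Suc (fst (xs ! n)) \<or> fst (xs ! n) = Suc (fst (xs ! Suc n))"
    unfolding BF_E_iff by blast
  with step show ?case by auto
qed simp

text \<open>Bit \<open>p\<close> can only change along an edge between levels \<open>p\<close> and \<open>p + 1\<close>.\<close>

lemma BF_walk_first_bit:
  assumes w: "is_walk (BF_V d) (BF_E d) xs"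
    and level: "\<forall>k<length xs. fst (xs ! k) \<noteq> 0" and "k < length xs"
  shows "snd (xs ! k) ! 0 = snd (xs ! 0) ! 0"
  using assms(3)
proof (induction k)
  case (Suc k)
  have "BF_E d (xs ! k) (xs ! Suc k)" using is_walk_BF_E[OF w] Suc by simp
  moreover have "fst (xs ! k) \<noteq> 0" "fst (xs ! Suc k) \<noteq> 0" using level Suc by auto
  moreover from calculation have "0 < d" unfolding BF_E_iff mem_BF_V by linarith
  ultimately have "snd (xs ! k) ! 0 = snd (xs ! Suc k) ! 0" unfolding BF_E_iff by metis
  then show ?case using Suc by simp
qed simp

text \<open>\<open>bf_le d x y\<close> says that \<open>y\<close> is reached from \<open>x\<close> by an ascending walk, which can change
only the bits at the positions \<open>fst x, \<dots>, fst y - 1\<close>.\<close>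

definition bf_le :: "nat \<Rightarrow> nat \<times> bool list \<Rightarrow> nat \<times> bool list \<Rightarrow> bool" where
  "bf_le d x y \<longleftrightarrow> fst x \<le> fst y \<and> (\<forall>k<d. (k < fst x \<or> fst y \<le> k) \<longrightarrow> snd x ! k = snd y ! k)"

text \<open>\<open>(l, line_word d l e c)\<close> is the level-\<open>l\<close> vertex of the ascending walk from \<open>(0, c)\<close>
to \<open>(d, e)\<close>.\<close>

definition line_word :: "nat \<Rightarrow> nat \<Rightarrow> bool list \<Rightarrow> bool list \<Rightarrow> bool list" where
  "line_word d l e c = map (\<lambda>k. if k < l then e ! k else c ! k) [0..<d]"

lemma length_line_word [simp]: "length (line_word d l e c) = d"
  by (simp add: line_word_def)

lemma nth_line_word [simp]: "k < d \<Longrightarrow> line_word d l e c ! k = (if k < l then e ! k else c ! k)"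
  by (simp add: line_word_def)

lemma bf_le_trans: "bf_le d x y \<Longrightarrow> bf_le d y z \<Longrightarrow> bf_le d x z"
  unfolding bf_le_def by (metis le_trans less_le_trans)

lemma bf_le_antisym: "bf_le d x y \<Longrightarrow> bf_le d y x \<Longrightarrow> x \<in> BF_V d \<Longrightarrow> y \<in> BF_V d \<Longrightarrow> x = y"
  unfolding bf_le_def BF_V_def by (cases x; cases y) (simp, rule nth_equalityI, auto)

lemma bf_le_level_less: "bf_le d x y \<Longrightarrow> x \<in> BF_V d \<Longrightarrow> y \<in> BF_V d \<Longrightarrow> x \<noteq> y \<Longrightarrow> fst x < fst y"
  using bf_le_antisym[of d x y] unfolding bf_le_def by (metis le_neq_implies_less order_refl)

lemma bf_le_same_word: "snd x = snd y \<Longrightarrow> bf_le d x y \<or> bf_le d y x"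
  unfolding bf_le_def by auto

lemma bf_le_line:
  "snd x = line_word d (fst x) e c \<Longrightarrow> snd y = line_word d (fst y) e c \<Longrightarrow> fst x \<le> fst y \<Longrightarrow>
   bf_le d x y"
  unfolding bf_le_def by auto

lemma line_word_between:
  assumes "bf_le d x y" "bf_le d y z" "y \<in> BF_V d"
  shows "snd y = line_word d (fst y) (snd z) (snd x)"
  using assms unfolding bf_le_def by (intro nth_equalityI) (auto simp: mem_BF_V)

lemma BF_E_line:
  assumes "BF_E d x y"
  obtains c e where "length c = d" "length e = d"
    "snd x = line_word d (fst x) e c" "snd y = line_word d (fst y) e c"
proof -
  have lx: "length (snd x) = d" and ly: "length (snd y) = d" using assms by (auto simp: BF_E_iff mem_BF_V)
  from assms consider "fst y = Suc (fst x)" "\<forall>p<d. p \<noteq> fst x \<longrightarrow> snd x ! p = snd y ! p"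
    | "fst x = Suc (fst y)" "\<forall>p<d. p \<noteq> fst y \<longrightarrow> snd x ! p = snd y ! p"
    unfolding BF_E_iff by blast
  then show ?thesis
  proof cases
    case 1
    have "snd x = line_word d (fst x) (snd y) (snd x)" using 1 lx by (intro nth_equalityI) auto
    moreover have "snd y = line_word d (fst y) (snd y) (snd x)" using 1 ly by (intro nth_equalityI) auto
    ultimately show ?thesis using that lx ly by blast
  next
    case 2
    have "snd x = line_word d (fst x) (snd x) (snd y)" using 2 lx by (intro nth_equalityI) auto
    moreover have "snd y = line_word d (fst y) (snd x) (snd y)" using 2 ly by (intro nth_equalityI) auto
    ultimately show ?thesis using that lx ly by blast
  qed
qed

lemma BF_walk_ascending:
  assumes w: "is_walk (BF_V d) (BF_E d) xs" and len: "length xs = Suc m"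
    and climb: "fst (xs ! m) = fst (xs ! 0) + m" and k: "k \<le> m"
  shows "xs ! k = (fst (xs ! 0) + k, line_word d (fst (xs ! 0) + k) (snd (xs ! m)) (snd (xs ! 0)))"
proof -
  define i where "i = fst (xs ! 0)"
  have level: "fst (xs ! j) = i + j" if "j \<le> m" for j
    using BF_walk_level_diff[OF w, of 0 j] BF_walk_level_diff[OF w, of j m] that len climb i_def
    by simp arith
  have edge: "\<forall>p<d. p \<noteq> i + j \<longrightarrow> snd (xs ! j) ! p = snd (xs ! Suc j) ! p" if "j < m" for j
    using is_walk_BF_E[OF w, of j] level[of j] level[of "Suc j"] that len
    unfolding BF_E_iff by auto
  have upper: "\<forall>p<d. i + j \<le> p \<longrightarrow> snd (xs ! j) ! p = snd (xs ! 0) ! p" if "j \<le> m" for j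
    using that
  proof (induction j)
    case (Suc j)
    then show ?case using edge[of j] by auto
  qed simp
  have lower: "\<forall>p<d. p < i + k \<longrightarrow> snd (xs ! j) ! p = snd (xs ! k) ! p" if "k \<le> j" "j \<le> m" for j
    using that
  proof (induction j rule: dec_induct)
    case (step n)
    then show ?case using edge[of n] by auto
  qed simp
  have "length (snd (xs ! k)) = d" using is_walk_BF_V[OF w, of k] k len by (simp add: mem_BF_V)
  then have "snd (xs ! k) = line_word d (i + k) (snd (xs ! m)) (snd (xs ! 0))"
    using upper[OF k] lower[of m] k by (intro nth_equalityI) auto
  then show ?thesis using level[OF k] i_def by (metis prod.collapse)
qed

lemma walk_of_len_line:
  assumes x: "x \<in> BF_V d" and z: "z \<in> BF_V d" and le: "bf_le d x z"
  shows "walk_of_len (BF_V d) (BF_E d) x z (fst z - fst x)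
           (map (\<lambda>k. (fst x + k, line_word d (fst x + k) (snd z) (snd x))) [0..<Suc (fst z - fst x)])"
    (is "walk_of_len _ _ _ _ _ ?ys")
proof -
  have xz: "fst x \<le> fst z" using le unfolding bf_le_def by simp
  have lx: "length (snd x) = d" and lz: "length (snd z) = d" and zd: "fst z \<le> d"
    using x z by (auto simp: mem_BF_V)
  have nth_ys: "?ys ! j = (fst x + j, line_word d (fst x + j) (snd z) (snd x))"
    if "j \<le> fst z - fst x" for j
    using that by (simp del: upt_Suc)
  have "line_word d (fst x) (snd z) (snd x) = snd x"
    using le lx unfolding bf_le_def by (intro nth_equalityI) auto
  then have "hd ?ys = x" by (simp del: upt_Suc add: hd_map)
  moreover have "line_word d (fst z) (snd z) (snd x) = snd z"
    using le lz unfolding bf_le_def by (intro nth_equalityI) auto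
  then have "last ?ys = z" using xz by (simp del: upt_Suc add: last_map)
  moreover have "set ?ys \<subseteq> BF_V d" using xz zd by (auto simp: mem_BF_V)
  moreover have "BF_E d (?ys ! k) (?ys ! Suc k)" if "Suc k < length ?ys" for k
  proof -
    have "Suc k \<le> fst z - fst x" using that by (simp del: upt_Suc)
    moreover from this have "?ys ! k = (fst x + k, line_word d (fst x + k) (snd z) (snd x))"
      and "?ys ! Suc k = (fst x + Suc k, line_word d (fst x + Suc k) (snd z) (snd x))"
      by (simp_all only: nth_ys)
    ultimately show ?thesis using xz zd by (auto simp: BF_E_iff mem_BF_V)
  qed
  ultimately show ?thesis unfolding walk_of_len_def is_walk_def by auto
qed

lemma shortest_path_bf_le:
  assumes x: "x \<in> BF_V d" and z: "z \<in> BF_V d" and le: "bf_le d x z"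
    and sp: "shortest_path (BF_V d) (BF_E d) x z xs"
  shows "length xs = Suc (fst z - fst x)"
    and "\<And>k. k \<le> fst z - fst x \<Longrightarrow> xs ! k = (fst x + k, line_word d (fst x + k) (snd z) (snd x))"
proof -
  define D where "D = graph_dist (BF_V d) (BF_E d) x z"
  have "walk_of_len (BF_V d) (BF_E d) x z D xs" using sp unfolding shortest_path_def D_def .
  note w = walk_of_len_nth(1)[OF this] and len = walk_of_len_nth(2)[OF this]
    and first = walk_of_len_nth(3)[OF this] and last = walk_of_len_nth(4)[OF this]
  have "D \<le> fst z - fst x"
    unfolding D_def graph_dist_def using walk_of_len_line[OF x z le] by (intro Least_le) blast
  moreover have "fst z \<le> fst x + D" using BF_walk_level_diff[OF w, of 0 D] len first last by simp
  ultimately have D: "D = fst z - fst x" by simp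
  then show "length xs = Suc (fst z - fst x)" using len by simp
  show "xs ! k = (fst x + k, line_word d (fst x + k) (snd z) (snd x))" if k: "k \<le> fst z - fst x" for k
    using BF_walk_ascending[OF w len _, of k] first last D k le unfolding bf_le_def by simp
qed

lemma mutual_visibility_set_no_chain3:
  assumes mv: "mutual_visibility_set (BF_V d) (BF_E d) X"
    and in_X: "x \<in> X" "y \<in> X" "z \<in> X" and xy: "bf_le d x y" "x \<noteq> y" and yz: "bf_le d y z" "y \<noteq> z"
  shows False
proof -
  have V: "x \<in> BF_V d" "y \<in> BF_V d" "z \<in> BF_V d"
    using in_X mutual_visibility_set_subset[OF mv] by auto
  have levels: "fst x < fst y" "fst y < fst z"
    using bf_le_level_less xy yz V by blast+
  have "X_visible (BF_V d) (BF_E d) X x z" using mv in_X by (simp add: mutual_visibility_set_def)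
  then obtain xs where sp: "shortest_path (BF_V d) (BF_E d) x z xs"
    and free: "internal_vertices xs \<inter> X = {}"
    unfolding X_visible_def by auto
  have xz: "bf_le d x z" using bf_le_trans xy yz by blast
  have "xs ! (fst y - fst x) = y"
    using shortest_path_bf_le(2)[OF V(1,3) xz sp, of "fst y - fst x"] levels
      line_word_between[OF xy(1) yz(1) V(2)] by (simp add: prod_eq_iff)
  moreover have "Suc (fst y - fst x) < length xs"
    using shortest_path_bf_le(1)[OF V(1,3) xz sp] levels by simp
  ultimately have "y \<in> internal_vertices xs"
    using nth_in_internal_vertices[of "fst y - fst x" xs] levels by simp
  then show False using free in_X by blast
qed

definition bf_antichain :: "nat \<Rightarrow> (nat \<times> bool list) set \<Rightarrow> bool" where
  "bf_antichain d A \<longleftrightarrow> (\<forall>x\<in>A. \<forall>y\<in>A. bf_le d x y \<longrightarrow> x = y)"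

definition bf_minimal :: "nat \<Rightarrow> (nat \<times> bool list) set \<Rightarrow> (nat \<times> bool list) set" where
  "bf_minimal d X = {x\<in>X. \<forall>y\<in>X. bf_le d y x \<longrightarrow> y = x}"

definition bf_maximal :: "nat \<Rightarrow> (nat \<times> bool list) set \<Rightarrow> (nat \<times> bool list) set" where
  "bf_maximal d X = {x\<in>X. \<forall>y\<in>X. bf_le d x y \<longrightarrow> y = x}"

lemma bf_antichain_subset: "bf_antichain d B \<Longrightarrow> A \<subseteq> B \<Longrightarrow> bf_antichain d A"
  unfolding bf_antichain_def by blast

lemma bf_antichain_minimal: "bf_antichain d (bf_minimal d X)"
  unfolding bf_antichain_def bf_minimal_def by auto

lemma bf_antichain_maximal: "bf_antichain d (bf_maximal d X)"
  unfolding bf_antichain_def bf_maximal_def by auto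

lemma inj_on_snd_bf_antichain: "bf_antichain d A \<Longrightarrow> inj_on snd A"
  unfolding bf_antichain_def by (metis bf_le_same_word inj_onI)

lemma card_bf_antichain_le:
  assumes "bf_antichain d A" "snd ` A \<subseteq> W" "finite W"
  shows "card A \<le> card W"
  using card_image[OF inj_on_snd_bf_antichain[OF assms(1)]] card_mono[OF assms(3,2)] by simp

lemma card_words: "card {c :: bool list. length c = n} = 2 ^ n"
  using card_lists_length_eq[of "UNIV :: bool set" n] by simp

lemma card_words_first_bit: "card {c :: bool list. length c = Suc n \<and> c ! 0 = b} = 2 ^ n"
proof -
  have "{c :: bool list. length c = Suc n \<and> c ! 0 = b} = (Cons b) ` {c. length c = n}"
    by (auto simp: length_Suc_conv)
  then show ?thesis using card_words[of n] by (simp add: card_image)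
qed

lemma card_BF_antichain_le:
  assumes "A \<subseteq> BF_V d" "bf_antichain d A"
  shows "card A \<le> 2 ^ d"
proof -
  have "snd ` A \<subseteq> {c. length c = d}" using assms(1) by (auto simp: mem_BF_V)
  moreover have "finite {c :: bool list. length c = d}"
    using finite_lists_length_eq[of "UNIV :: bool set" d] by simp
  ultimately show ?thesis using card_bf_antichain_le[OF assms(2)] card_words by metis
qed

text \<open>Two vertices of one line are comparable. Fix the set \<open>s\<close> of positions where \<open>c\<close> and \<open>e\<close>
differ: every vertex lies on exactly one line whose end words differ exactly on \<open>s\<close>, namely the
one starting at \<open>start t\<close>. So \<open>start\<close> is injective on an antichain, and onto if the antichain has
\<open>2^d\<close> elements.\<close>

lemma bf_antichain_meets_line:
  assumes A: "A \<subseteq> BF_V d" "bf_antichain d A" "card A = 2 ^ d"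
    and c: "length c = d" and e: "length e = d"
  obtains t where "t \<in> A" "snd t = line_word d (fst t) e c"
proof -
  define s where "s k \<longleftrightarrow> c ! k \<noteq> e ! k" for k
  define start where "start t = map (\<lambda>k. if k < fst t then (snd t ! k \<noteq> s k) else snd t ! k) [0..<d]"
    for t :: "nat \<times> bool list"
  define final where "final c' = map (\<lambda>k. c' ! k \<noteq> s k) [0..<d]" for c' :: "bool list"
  have on_line: "snd t = line_word d (fst t) (final (start t)) (start t)" if "t \<in> A" for t
  proof -
    have "length (snd t) = d" using that A(1) by (auto simp: mem_BF_V)
    then show ?thesis unfolding final_def start_def by (intro nth_equalityI) auto
  qed
  have inj: "inj_on start A"
  proof (rule inj_onI)
    fix x y assume x: "x \<in> A" and y: "y \<in> A" and eq: "start x = start y"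
    have "snd y = line_word d (fst y) (final (start x)) (start x)" using on_line[OF y] unfolding eq .
    then have "bf_le d x y \<or> bf_le d y x" using bf_le_line[OF on_line[OF x]] bf_le_line[OF _ on_line[OF x]]
      by (meson nle_le)
    then show "x = y" using A(2) x y unfolding bf_antichain_def by metis
  qed
  have "card (start ` A) = card {c :: bool list. length c = d}"
    using card_image[OF inj] A(3) card_words by simp
  moreover have "start ` A \<subseteq> {c. length c = d}" unfolding start_def by auto
  moreover have "finite {c :: bool list. length c = d}"
    using finite_lists_length_eq[of "UNIV :: bool set" d] by simp
  ultimately have "c \<in> start ` A" using card_subset_eq c by blast
  then obtain t where t: "t \<in> A" "start t = c" by blast
  moreover have "final c = e" unfolding final_def s_def using c e by (intro nth_equalityI) auto
  ultimately have "snd t = line_word d (fst t) e c" using on_line[OF t(1)] by simp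
  then show ?thesis using that t(1) by blast
qed

lemma mutual_visibility_set_nonminimal_maximal:
  assumes mv: "mutual_visibility_set (BF_V d) (BF_E d) X"
  shows "X - bf_minimal d X \<subseteq> bf_maximal d X"
proof
  fix x assume x: "x \<in> X - bf_minimal d X"
  then obtain y where y: "y \<in> X" "bf_le d y x" "y \<noteq> x" unfolding bf_minimal_def by auto
  have "z = x" if "z \<in> X" "bf_le d x z" for z
    using mutual_visibility_set_no_chain3[OF mv y(1) _ that(1) y(2,3) that(2)] x by blast
  then show "x \<in> bf_maximal d X" using x unfolding bf_maximal_def by blast
qed

definition bf_strictly_above :: "nat \<Rightarrow> (nat \<times> bool list) set \<Rightarrow> nat \<times> bool list \<Rightarrow> bool" where
  "bf_strictly_above d T x \<longleftrightarrow> (\<exists>t\<in>T. bf_le d t x \<and> t \<noteq> x)"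

lemma bf_strictly_above_level:
  "bf_strictly_above d T x \<Longrightarrow> T \<subseteq> BF_V d \<Longrightarrow> x \<in> BF_V d \<Longrightarrow> 0 < fst x"
  unfolding bf_strictly_above_def using bf_le_level_less by fastforce

text \<open>The line through the edge meets \<open>T\<close> in a vertex \<open>s\<close>. It cannot lie at or above \<open>a\<close>,
which is already above another vertex of the antichain, nor strictly below \<open>b\<close>; so it is \<open>b\<close>.\<close>

lemma BF_E_leaving_strictly_above:
  assumes T: "T \<subseteq> BF_V d" "bf_antichain d T" "card T = 2 ^ d"
    and edge: "BF_E d a b"
    and a: "bf_strictly_above d T a" and b: "\<not> bf_strictly_above d T b"
  shows "b \<in> T"
proof -
  have V: "a \<in> BF_V d" "b \<in> BF_V d" using edge by (simp_all add: BF_E_iff)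
  obtain t where t: "t \<in> T" "bf_le d t a" "t \<noteq> a" using a unfolding bf_strictly_above_def by blast
  obtain c e where line: "length c = d" "length e = d"
    "snd a = line_word d (fst a) e c" "snd b = line_word d (fst b) e c"
    using BF_E_line[OF edge] .
  obtain s where s: "s \<in> T" "snd s = line_word d (fst s) e c"
    using bf_antichain_meets_line[OF T line(1,2)] .
  have "fst s < fst a"
  proof (rule ccontr)
    assume "\<not> fst s < fst a"
    then have "bf_le d a s" using bf_le_line[OF line(3) s(2)] by simp
    then have "t = s" using T(2) t(1,2) s(1) bf_le_trans unfolding bf_antichain_def by blast
    then show False using bf_le_antisym[OF \<open>bf_le d a s\<close>] t(2,3) V(1) T(1) s(1) by blast
  qed
  moreover have "fst b \<le> fst s"
  proof (rule ccontr)
    assume "\<not> fst b \<le> fst s"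
    then have "bf_le d s b" "s \<noteq> b" using bf_le_line[OF s(2) line(4)] by auto
    then show False using b s(1) unfolding bf_strictly_above_def by blast
  qed
  moreover have "fst b = Suc (fst a) \<or> fst a = Suc (fst b)" using edge unfolding BF_E_iff by blast
  ultimately have "fst b = fst s" by auto
  then have "b = s" using s(2) line(4) by (simp add: prod_eq_iff)
  then show ?thesis using s(1) by simp
qed

lemma BF_walk_reaching_level_0:
  assumes T: "T \<subseteq> BF_V d" "bf_antichain d T" "card T = 2 ^ d"
    and w: "is_walk (BF_V d) (BF_E d) xs" and start: "bf_strictly_above d T (xs ! 0)"
    and k: "k < length xs" "fst (xs ! k) = 0"
  obtains p where "p < k" "xs ! Suc p \<in> T"
proof -
  have "\<not> bf_strictly_above d T (xs ! k)"
    using bf_strictly_above_level[OF _ T(1) is_walk_BF_V[OF w k(1)]] k(2) by auto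
  then obtain p where p: "p < k" "bf_strictly_above d T (xs ! p)" "\<not> bf_strictly_above d T (xs ! Suc p)"
    using ex_least_nat_less[of "\<lambda>i. \<not> bf_strictly_above d T (xs ! i)" k] start by auto
  then have "xs ! Suc p \<in> T"
    using BF_E_leaving_strictly_above[OF T is_walk_BF_E[OF w, of p]] k(1) by simp
  then show ?thesis using that p(1) by blast
qed

lemma mutual_visibility_set_nonminimal_strictly_above:
  assumes mv: "mutual_visibility_set (BF_V d) (BF_E d) X" and r: "r \<in> X - bf_minimal d X"
  shows "bf_strictly_above d (bf_minimal d X) r"
proof -
  obtain t where t: "t \<in> X" "bf_le d t r" "t \<noteq> r" using r unfolding bf_minimal_def by auto
  have "z = t" if "z \<in> X" "bf_le d z t" for z
    using mutual_visibility_set_no_chain3[OF mv that(1) t(1) _ that(2) _ t(2,3)] r by blast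
  then have "t \<in> bf_minimal d X" using t(1) unfolding bf_minimal_def by blast
  then show ?thesis using t unfolding bf_strictly_above_def by blast
qed

lemma mutual_visibility_set_nonminimal_first_bit:
  assumes mv: "mutual_visibility_set (BF_V d) (BF_E d) X"
    and full: "card (bf_minimal d X) = 2 ^ d"
    and r: "r1 \<in> X - bf_minimal d X" "r2 \<in> X - bf_minimal d X"
  shows "snd r1 ! 0 = snd r2 ! 0"
proof (rule ccontr)
  assume differ: "snd r1 ! 0 \<noteq> snd r2 ! 0"
  define T where "T = bf_minimal d X"
  have XV: "X \<subseteq> BF_V d" using mutual_visibility_set_subset[OF mv] .
  have TX: "T \<subseteq> X" unfolding T_def bf_minimal_def by blast
  have T: "T \<subseteq> BF_V d" "bf_antichain d T" "card T = 2 ^ d"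
    using TX XV full bf_antichain_minimal unfolding T_def by blast+
  have "X_visible (BF_V d) (BF_E d) X r1 r2" using mv r by (simp add: mutual_visibility_set_def)
  then obtain xs where sp: "shortest_path (BF_V d) (BF_E d) r1 r2 xs"
    and free: "internal_vertices xs \<inter> X = {}"
    unfolding X_visible_def by auto
  define D where "D = graph_dist (BF_V d) (BF_E d) r1 r2"
  have "walk_of_len (BF_V d) (BF_E d) r1 r2 D xs" using sp unfolding shortest_path_def D_def .
  note w = walk_of_len_nth(1)[OF this] and len = walk_of_len_nth(2)[OF this]
    and first = walk_of_len_nth(3)[OF this] and last = walk_of_len_nth(4)[OF this]
  have "\<exists>k<length xs. fst (xs ! k) = 0"
  proof (rule ccontr)
    assume "\<not> (\<exists>k<length xs. fst (xs ! k) = 0)"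
    then show False using BF_walk_first_bit[OF w, of D] first last len differ by auto
  qed
  then obtain k where k: "k < length xs" "fst (xs ! k) = 0" by blast
  moreover have "bf_strictly_above d T (xs ! 0)"
    using mutual_visibility_set_nonminimal_strictly_above[OF mv r(1)] first T_def by simp
  ultimately obtain p where p: "p < k" "xs ! Suc p \<in> T" using BF_walk_reaching_level_0[OF T w] by blast
  have "0 < fst r2"
    using bf_strictly_above_level mutual_visibility_set_nonminimal_strictly_above[OF mv r(2)]
      T(1) XV r(2) unfolding T_def by blast
  then have "k \<noteq> D" using k(2) last by auto
  then have "xs ! Suc p \<in> internal_vertices xs"
    using nth_in_internal_vertices[of "Suc p" xs] p(1) k(1) len by simp
  then show False using free p(2) TX by blast
qed

lemma card_nonminimal_le:
  assumes d: "2 \<le> d" and mv: "mutual_visibility_set (BF_V d) (BF_E d) X"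
    and full: "card (bf_minimal d X) = 2 ^ d"
  shows "card (X - bf_minimal d X) \<le> 2 ^ d - 2"
proof (cases "X - bf_minimal d X = {}")
  case False
  then obtain r where r: "r \<in> X - bf_minimal d X" by blast
  obtain n where n: "d = Suc n" using d by (cases d) auto
  have "bf_antichain d (X - bf_minimal d X)"
    using bf_antichain_subset[OF bf_antichain_maximal mutual_visibility_set_nonminimal_maximal[OF mv]] .
  moreover have "snd ` (X - bf_minimal d X) \<subseteq> {c. length c = Suc n \<and> c ! 0 = snd r ! 0}"
    using mutual_visibility_set_nonminimal_first_bit[OF mv full _ r] mutual_visibility_set_subset[OF mv] n
    by (auto simp: mem_BF_V)
  moreover have "finite {c :: bool list. length c = Suc n \<and> c ! 0 = snd r ! 0}"
    using finite_lists_length_eq[of "UNIV :: bool set" "Suc n"] by (auto intro: finite_subset)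
  ultimately have "card (X - bf_minimal d X) \<le> 2 ^ n"
    using card_bf_antichain_le card_words_first_bit by metis
  moreover have "2 ^ n \<le> (2 :: nat) ^ d - 2" using n d power_increasing[of 1 n "2 :: nat"] by simp
  ultimately show ?thesis by linarith
next
  case True
  show ?thesis unfolding True by simp
qed

lemma card_mutual_visibility_set_le_of_full_minimal:
  assumes d: "2 \<le> d" and mv: "mutual_visibility_set (BF_V d) (BF_E d) X"
    and full: "card (bf_minimal d X) = 2 ^ d"
  shows "card X \<le> 2 ^ (d + 1) - 2"
proof -
  have fin: "finite X" using mutual_visibility_set_subset[OF mv] finite_BF_V finite_subset by blast
  have sub: "bf_minimal d X \<subseteq> X" unfolding bf_minimal_def by blast
  have "card X = card (bf_minimal d X) + card (X - bf_minimal d X)"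
    using card_Diff_subset[OF finite_subset[OF sub fin] sub] card_mono[OF fin sub] by simp
  then show ?thesis using card_nonminimal_le[OF d mv full] full d power_increasing[of 1 d "2 :: nat"]
    by simp
qed

definition bf_reflect :: "nat \<Rightarrow> nat \<times> bool list \<Rightarrow> nat \<times> bool list" where
  "bf_reflect d x = (d - fst x, rev (snd x))"

lemma bf_reflect_bf_reflect: "x \<in> BF_V d \<Longrightarrow> bf_reflect d (bf_reflect d x) = x"
  unfolding bf_reflect_def by (simp add: mem_BF_V prod_eq_iff)

lemma bf_reflect_in_BF_V: "x \<in> BF_V d \<Longrightarrow> bf_reflect d x \<in> BF_V d"
  unfolding bf_reflect_def by (auto simp: mem_BF_V)

lemma BF_E_bf_reflect:
  assumes edge: "BF_E d x y"
  shows "BF_E d (bf_reflect d x) (bf_reflect d y)"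
proof -
  have V: "x \<in> BF_V d" "y \<in> BF_V d" using edge by (simp_all add: BF_E_iff)
  then have rev_agree: "rev (snd x) ! p = rev (snd y) ! p"
    if "p < d" "snd x ! (d - Suc p) = snd y ! (d - Suc p)" for p
    using that by (simp add: mem_BF_V rev_nth)
  from edge consider "fst y = Suc (fst x)" "\<forall>p<d. p \<noteq> fst x \<longrightarrow> snd x ! p = snd y ! p"
    | "fst x = Suc (fst y)" "\<forall>p<d. p \<noteq> fst y \<longrightarrow> snd x ! p = snd y ! p"
    unfolding BF_E_iff by blast
  then show ?thesis
  proof cases
    case 1
    then have "\<forall>p<d. p \<noteq> d - fst y \<longrightarrow> rev (snd x) ! p = rev (snd y) ! p"
      using V rev_agree by (auto simp: mem_BF_V)
    then show ?thesis using 1 V unfolding BF_E_iff bf_reflect_def by (auto simp: mem_BF_V)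
  next
    case 2
    then have "\<forall>p<d. p \<noteq> d - fst x \<longrightarrow> rev (snd x) ! p = rev (snd y) ! p"
      using V rev_agree by (auto simp: mem_BF_V)
    then show ?thesis using 2 V unfolding BF_E_iff bf_reflect_def by (auto simp: mem_BF_V)
  qed
qed

interpretation bf_reflection: graph_involution "BF_V d" "BF_E d" "bf_reflect d"
  by unfold_locales (auto simp: bf_reflect_bf_reflect bf_reflect_in_BF_V BF_E_bf_reflect)

lemma bf_le_bf_reflect:
  assumes le: "bf_le d x y" and V: "x \<in> BF_V d" "y \<in> BF_V d"
  shows "bf_le d (bf_reflect d y) (bf_reflect d x)"
proof -
  have "rev (snd y) ! k = rev (snd x) ! k" if "k < d" "k < d - fst y \<or> d - fst x \<le> k" for k
  proof -
    have "d - Suc k < fst x \<or> fst y \<le> d - Suc k" using that V by (auto simp: mem_BF_V)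
    moreover have "d - Suc k < d" using that(1) by simp
    ultimately have "snd x ! (d - Suc k) = snd y ! (d - Suc k)" using le unfolding bf_le_def by blast
    then show ?thesis using that(1) V by (simp add: mem_BF_V rev_nth)
  qed
  then show ?thesis using le unfolding bf_le_def bf_reflect_def by auto
qed

lemma bf_minimal_bf_reflect:
  assumes XV: "X \<subseteq> BF_V d"
  shows "bf_minimal d (bf_reflect d ` X) = bf_reflect d ` bf_maximal d X"
proof -
  have le_iff: "bf_le d (bf_reflect d y) (bf_reflect d x) \<longleftrightarrow> bf_le d x y" if "x \<in> X" "y \<in> X" for x y
  proof
    have V: "x \<in> BF_V d" "y \<in> BF_V d" using that XV by auto
    show "bf_le d x y \<Longrightarrow> bf_le d (bf_reflect d y) (bf_reflect d x)" using bf_le_bf_reflect V by blast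
    assume "bf_le d (bf_reflect d y) (bf_reflect d x)"
    then have "bf_le d (bf_reflect d (bf_reflect d x)) (bf_reflect d (bf_reflect d y))"
      using bf_le_bf_reflect bf_reflect_in_BF_V V by blast
    then show "bf_le d x y" using bf_reflect_bf_reflect V by simp
  qed
  have eq_iff: "bf_reflect d y = bf_reflect d x \<longleftrightarrow> y = x" if "x \<in> X" "y \<in> X" for x y
    using bf_reflect_bf_reflect[of x d] bf_reflect_bf_reflect[of y d] that XV by (metis subsetD)
  show ?thesis
  proof (intro equalityI subsetI)
    fix z assume "z \<in> bf_minimal d (bf_reflect d ` X)"
    then obtain x where x: "x \<in> X" "z = bf_reflect d x"
      and "\<forall>y\<in>X. bf_le d (bf_reflect d y) z \<longrightarrow> bf_reflect d y = z"
      unfolding bf_minimal_def by blast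
    then have "x \<in> bf_maximal d X" unfolding bf_maximal_def using le_iff eq_iff by auto
    then show "z \<in> bf_reflect d ` bf_maximal d X" using x by blast
  next
    fix z assume "z \<in> bf_reflect d ` bf_maximal d X"
    then obtain x where x: "x \<in> X" "z = bf_reflect d x" and "\<forall>y\<in>X. bf_le d x y \<longrightarrow> y = x"
      unfolding bf_maximal_def by blast
    then show "z \<in> bf_minimal d (bf_reflect d ` X)" unfolding bf_minimal_def using le_iff by auto
  qed
qed

lemma card_mutual_visibility_set_BF_le:
  assumes d: "2 \<le> d" and mv: "mutual_visibility_set (BF_V d) (BF_E d) X"
  shows "card X \<le> 2 ^ (d + 1) - 2"
proof -
  have XV: "X \<subseteq> BF_V d" using mutual_visibility_set_subset[OF mv] .
  have layers: "bf_minimal d X \<subseteq> BF_V d" "bf_maximal d X \<subseteq> BF_V d"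
    using XV unfolding bf_minimal_def bf_maximal_def by blast+
  have bound: "card (bf_minimal d X) \<le> 2 ^ d" "card (bf_maximal d X) \<le> 2 ^ d"
    using card_BF_antichain_le[OF layers(1) bf_antichain_minimal]
      card_BF_antichain_le[OF layers(2) bf_antichain_maximal] by simp_all
  consider "card (bf_minimal d X) = 2 ^ d" | "card (bf_maximal d X) = 2 ^ d"
    | "card (bf_minimal d X) < 2 ^ d" "card (bf_maximal d X) < 2 ^ d"
    using bound by linarith
  then show ?thesis
  proof cases
    case 1
    then show ?thesis using card_mutual_visibility_set_le_of_full_minimal[OF d mv] by simp
  next
    case 2
    have inj: "inj_on (bf_reflect d) X" using XV bf_reflect_bf_reflect by (metis inj_on_inverseI subsetD)
    have "bf_maximal d X \<subseteq> X" unfolding bf_maximal_def by blast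
    then have "card (bf_minimal d (bf_reflect d ` X)) = card (bf_maximal d X)"
      unfolding bf_minimal_bf_reflect[OF XV] by (intro card_image inj_on_subset[OF inj])
    with 2 have "card (bf_minimal d (bf_reflect d ` X)) = 2 ^ d" by simp
    then have "card (bf_reflect d ` X) \<le> 2 ^ (d + 1) - 2"
      using card_mutual_visibility_set_le_of_full_minimal[OF d]
        bf_reflection.mutual_visibility_set_image[OF mv] by blast
    then show ?thesis using card_image[OF inj] by simp
  next
    case 3
    have "X \<subseteq> bf_minimal d X \<union> bf_maximal d X"
      using mutual_visibility_set_nonminimal_maximal[OF mv] by blast
    moreover have "finite (bf_minimal d X \<union> bf_maximal d X)"
      using layers finite_BF_V finite_subset by (metis Un_subset_iff)
    ultimately have "card X \<le> card (bf_minimal d X \<union> bf_maximal d X)" by (rule card_mono[rotated])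
    also have "\<dots> \<le> card (bf_minimal d X) + card (bf_maximal d X)" by (rule card_Un_le)
    finally show ?thesis using 3 by simp
  qed
qed

theorem lemma5p3:
  fixes d :: nat
  assumes "d \<ge> 2"
  shows "mu (BF_V d) (BF_E d) \<le> 2 ^ (d + 1) - 2"
  using card_mutual_visibility_set_BF_le[OF assms] by (rule mu_le)

end
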